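(* Let $P$ be a finite poset with height function $h$ and a unique minimum $\hat{0}$. Then $$\mathsf{Z}_{P,h}([0]_q)=q^{-h(\hat{0})}\big(1-\chi_{P\setminus\{\hat{0}\}}\big),$$ where $\chi_R=\sum_{k\ge1}(-1)^{k-1}\#\operatorname{Ch}_k(R)$ (so $\chi_\emptyset=0$). In particular, if $P$ also has a unique maximum $\hat{1}\neq\hat{0}$, then $\mathsf{Z}_{P,h}([0]_q)=0$.
   Context: $q$ is an indeterminate; $[n]_q=(q^n-1)/(q-1)$ (so $[0]_q=0$). A height function is $h:P\to\mathbb{N}$ with $h(x)<h(y)$ whenever $y$ covers $x$. $\operatorname{Ch}_k(R)$ is the set of strict chains $c_1<\cdots<c_k$ in $R$. For a tuple $a$ of $k$ distinct nonnegative integers, $\mathsf{E}_a\in\mathbb{Q}(q)[x]$ is the unique polynomial with $\mathsf{E}_a([n]_q)=\sum_{m\in\mathbb{N}^k,\sum m_i=n}q^{\sum a_im_i}$ for $n\ge0$. The $q$-Zeta polynomial is $\mathsf{Z}_{P,h}(x)=\sum_{k\ge1}\sum_{c\in\operatorname{Ch}_k(P)}q^{\sum_i h(c_i)}\mathsf{E}_{(h(c_1),\dots,h(c_k))}((x-[k+1]_q)/q^{k+1})$; it is the unique polynomial with $\mathsf{Z}_{P,h}([n]_q)=\sum_{e_1\le\cdots\le e_{n-1}}q^{\sum_j h(e_j)}$ for all $n\ge2$. *)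

theory Defs
  imports "HOL-Computational_Algebra.Polynomial" "HOL-Computational_Algebra.Fraction_Field"
begin

type_synonym qfield = "rat poly fract"

definition qvar :: qfield where
  "qvar = Fract [:0, 1:] 1"

definition qint :: "nat \<Rightarrow> qfield" where
  "qint n = (qvar ^ n - 1) / (qvar - 1)"

definition Epoly :: "nat list \<Rightarrow> qfield poly" where
  "Epoly a = (THE p. \<forall>n. poly p (qint n) =
      (\<Sum>m\<in>{m :: nat list. length m = length a \<and> sum_list m = n}.
          qvar ^ (\<Sum>i<length a. a ! i * m ! i)))"

text \<open>Posets are finite subsets of a type of class order, with the induced order.\<close>
definition covers :: "'a::order set \<Rightarrow> 'a \<Rightarrow> 'a \<Rightarrow> bool" where
  "covers P x y \<longleftrightarrow> x \<in> P \<and> y \<in> P \<and> x < y \<and> \<not> (\<exists>z\<in>P. x < z \<and> z < y)"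

definition height_fun :: "'a::order set \<Rightarrow> ('a \<Rightarrow> nat) \<Rightarrow> bool" where
  "height_fun P h \<longleftrightarrow> (\<forall>x y. covers P x y \<longrightarrow> h x < h y)"

definition chains :: "nat \<Rightarrow> 'a::order set \<Rightarrow> 'a list set" where
  "chains k R = {c. length c = k \<and> sorted_wrt (<) c \<and> set c \<subseteq> R}"

definition qZeta :: "'a::order set \<Rightarrow> ('a \<Rightarrow> nat) \<Rightarrow> qfield poly" where
  "qZeta P h = (\<Sum>k\<in>{1..card P}. \<Sum>c\<in>chains k P.
      smult (qvar ^ (\<Sum>i<k. h (c ! i)))
        (pcompose (Epoly (map h c))
           [: - qint (k + 1) / qvar ^ (k + 1), 1 / qvar ^ (k + 1) :]))"

definition chi :: "'a::order set \<Rightarrow> int" where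
  "chi R = (\<Sum>k\<in>{1..card R}. (-1) ^ (k - 1) * int (card (chains k R)))"

end

theory Submission
  imports Defs
begin

text \<open>
  At x = [0]_q = 0 the summand of a k-chain c evaluates E_a, a = h(c), at
  y = -[k+1]_q / q^(k+1), where 1 + (q - 1) y = q^-(k+1). Expanding E_a by partial fractions
  in the nodes q^e (complete homogeneous symmetric polynomials are divided differences of
  powers), this value is the divided difference of x^-2 at those nodes, and the summand becomes
  (-1)^(k-1) times the sum of q^-h(x) over the elements x of c. Exchanging the sums, q^-h(x)
  is weighted by a signed count of the chains through x. Inserting or removing the minimum z
  is a sign-reversing involution on chains; it kills the weights of all x \<noteq> z and leaves
  1 - chi(P - {z}) for z itself. A maximum t \<noteq> z is comparable with every element of
  P - {z}, and the same involution on the chains of P - {z} gives chi(P - {z}) = 1.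
\<close>

section \<open>Divided differences\<close>

text \<open>For f e = g (x e) this is the divided difference of g at the nodes x e, e \<in> A.\<close>

definition divided_diff :: "('b \<Rightarrow> 'f::field) \<Rightarrow> 'b set \<Rightarrow> ('b \<Rightarrow> 'f) \<Rightarrow> 'f" where
  "divided_diff x A f = (\<Sum>e\<in>A. f e / (\<Prod>e'\<in>A - {e}. (x e - x e')))"

lemma divided_diff_singleton [simp]: "divided_diff x {b} f = f b"
  by (simp add: divided_diff_def)

lemma divided_diff_mult_node:
  assumes "finite A" and "inj_on x A" and "b \<in> A"
  shows "divided_diff x A (\<lambda>e. x e * f e) - x b * divided_diff x A f = divided_diff x (A - {b}) f"
proof -
  have "divided_diff x A (\<lambda>e. x e * f e) - x b * divided_diff x A f
      = (\<Sum>e\<in>A. (x e - x b) * f e / (\<Prod>e'\<in>A - {e}. (x e - x e')))"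
    unfolding divided_diff_def
    by (simp add: sum_distrib_left sum_subtractf[symmetric] algebra_simps diff_divide_distrib)
  also have "\<dots> = (\<Sum>e\<in>A - {b}. (x e - x b) * f e / (\<Prod>e'\<in>A - {e}. (x e - x e')))"
    using sum.remove [OF assms(1,3), of "\<lambda>e. (x e - x b) * f e / (\<Prod>e'\<in>A - {e}. (x e - x e'))"] by simp
  also have "\<dots> = (\<Sum>e\<in>A - {b}. f e / (\<Prod>e'\<in>(A - {b}) - {e}. (x e - x e')))"
  proof (rule sum.cong [OF refl])
    fix e assume e: "e \<in> A - {b}"
    have "x e - x b \<noteq> 0" using assms(2,3) e by (auto dest: inj_onD)
    moreover have "(\<Prod>e'\<in>A - {e}. (x e - x e')) = (x e - x b) * (\<Prod>e'\<in>(A - {b}) - {e}. (x e - x e'))"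
      using prod.remove [of "A - {e}" b "\<lambda>e'. x e - x e'"] assms(1,3) e
      by (auto simp: Diff_insert2 [symmetric] insert_commute)
    ultimately show "(x e - x b) * f e / (\<Prod>e'\<in>A - {e}. (x e - x e'))
        = f e / (\<Prod>e'\<in>(A - {b}) - {e}. (x e - x e'))"
      by simp
  qed
  finally show ?thesis unfolding divided_diff_def .
qed

lemma divided_diff_power:
  assumes "card A = Suc k" and "inj_on x A" and "m \<le> k"
  shows "divided_diff x A (\<lambda>e. x e ^ m) = (if m = k then 1 else 0)"
  using assms
proof (induction k arbitrary: A m)
  case 0
  then obtain b where "A = {b}" by (auto simp: card_Suc_eq)
  with 0 show ?case by simp
next
  case (Suc k)
  have fin: "finite A" using Suc.prems(1) card.infinite by force
  obtain b c where bc: "b \<in> A" "c \<in> A" "b \<noteq> c"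
    using Suc.prems(1) by (auto simp: card_Suc_eq)
  have cards: "card (A - {b}) = Suc k" "card (A - {c}) = Suc k"
    using Suc.prems(1) fin bc by simp_all
  have injs: "inj_on x (A - {b})" "inj_on x (A - {c})"
    using Suc.prems(2) by (auto intro: inj_on_subset)
  have zero: "divided_diff x A (\<lambda>e. x e ^ m) = 0" if "m \<le> k" for m
  proof -
    have "(x c - x b) * divided_diff x A (\<lambda>e. x e ^ m)
        = divided_diff x (A - {b}) (\<lambda>e. x e ^ m) - divided_diff x (A - {c}) (\<lambda>e. x e ^ m)"
      using divided_diff_mult_node [OF fin Suc.prems(2) bc(1)]
        divided_diff_mult_node [OF fin Suc.prems(2) bc(2)]
      by (simp add: algebra_simps)
    also have "\<dots> = 0"
      using Suc.IH [OF cards(1) injs(1) that] Suc.IH [OF cards(2) injs(2) that] by simp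
    finally show ?thesis using Suc.prems(2) bc by (auto dest: inj_onD)
  qed
  show ?case
  proof (cases "m = Suc k")
    case True
    have "divided_diff x A (\<lambda>e. x e * x e ^ k) - x b * divided_diff x A (\<lambda>e. x e ^ k)
        = divided_diff x (A - {b}) (\<lambda>e. x e ^ k)"
      by (rule divided_diff_mult_node [OF fin Suc.prems(2) bc(1)])
    then show ?thesis using zero [of k] Suc.IH [OF cards(1) injs(1), of k] True by simp
  next
    case False
    then show ?thesis using Suc.prems(3) zero by simp
  qed
qed

lemma divided_diff_inverse:
  assumes "card A = Suc k" and "inj_on x A" and "\<forall>e\<in>A. x e \<noteq> 0"
  shows "divided_diff x A (\<lambda>e. inverse (x e)) = (-1) ^ k * (\<Prod>e\<in>A. inverse (x e))"
  using assms
proof (induction k arbitrary: A)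
  case 0
  then obtain b where "A = {b}" by (auto simp: card_Suc_eq)
  then show ?case by simp
next
  case (Suc k)
  have fin: "finite A" using Suc.prems(1) card.infinite by force
  obtain b where b: "b \<in> A" using Suc.prems(1) by fastforce
  have IH: "divided_diff x (A - {b}) (\<lambda>e. inverse (x e)) = (-1) ^ k * (\<Prod>e\<in>A - {b}. inverse (x e))"
    using Suc.IH [of "A - {b}"] Suc.prems fin b by (auto intro: inj_on_subset)
  have "divided_diff x A (\<lambda>e. x e * inverse (x e)) = divided_diff x A (\<lambda>e. x e ^ 0)"
    unfolding divided_diff_def using Suc.prems(3) by simp
  also have "\<dots> = 0" using divided_diff_power [OF Suc.prems(1,2), of 0] by simp
  finally have "- x b * divided_diff x A (\<lambda>e. inverse (x e)) = divided_diff x (A - {b}) (\<lambda>e. inverse (x e))"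
    using divided_diff_mult_node [OF fin Suc.prems(2) b, of "\<lambda>e. inverse (x e)"] by simp
  then have "x b * divided_diff x A (\<lambda>e. inverse (x e)) = - divided_diff x (A - {b}) (\<lambda>e. inverse (x e))"
    by (metis minus_equation_iff mult_minus_left)
  moreover have "x b \<noteq> 0" using Suc.prems(3) b by simp
  ultimately have "divided_diff x A (\<lambda>e. inverse (x e))
      = - inverse (x b) * divided_diff x (A - {b}) (\<lambda>e. inverse (x e))"
    by (simp add: field_simps)
  then show ?case
    unfolding IH prod.remove [OF fin b] by simp
qed

lemma divided_diff_inverse_square:
  assumes "card A = Suc k" and "inj_on x A" and "\<forall>e\<in>A. x e \<noteq> 0"
  shows "divided_diff x A (\<lambda>e. inverse (x e) ^ 2)
    = (-1) ^ k * (\<Prod>e\<in>A. inverse (x e)) * (\<Sum>e\<in>A. inverse (x e))"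
  using assms
proof (induction k arbitrary: A)
  case 0
  then obtain b where "A = {b}" by (auto simp: card_Suc_eq)
  then show ?case by (simp add: power2_eq_square)
next
  case (Suc k)
  have fin: "finite A" using Suc.prems(1) card.infinite by force
  obtain b where b: "b \<in> A" using Suc.prems(1) by fastforce
  have IH: "divided_diff x (A - {b}) (\<lambda>e. inverse (x e) ^ 2)
      = (-1) ^ k * (\<Prod>e\<in>A - {b}. inverse (x e)) * (\<Sum>e\<in>A - {b}. inverse (x e))"
    using Suc.IH [of "A - {b}"] Suc.prems fin b by (auto intro: inj_on_subset)
  have "divided_diff x A (\<lambda>e. x e * inverse (x e) ^ 2) = divided_diff x A (\<lambda>e. inverse (x e))"
    unfolding divided_diff_def using Suc.prems(3) by (intro sum.cong) (auto simp: power2_eq_square)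
  also have "\<dots> = (-1) ^ Suc k * (\<Prod>e\<in>A. inverse (x e))"
    by (rule divided_diff_inverse [OF Suc.prems])
  finally have "x b * divided_diff x A (\<lambda>e. inverse (x e) ^ 2)
      = (-1) ^ Suc k * (\<Prod>e\<in>A. inverse (x e)) - divided_diff x (A - {b}) (\<lambda>e. inverse (x e) ^ 2)"
    using divided_diff_mult_node [OF fin Suc.prems(2) b, of "\<lambda>e. inverse (x e) ^ 2"]
    by (simp add: algebra_simps)
  moreover have "x b \<noteq> 0" using Suc.prems(3) b by simp
  ultimately have "divided_diff x A (\<lambda>e. inverse (x e) ^ 2)
      = inverse (x b) * ((-1) ^ Suc k * (\<Prod>e\<in>A. inverse (x e))
          - divided_diff x (A - {b}) (\<lambda>e. inverse (x e) ^ 2))"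
    by (simp add: field_simps)
  then show ?case
    unfolding IH prod.remove [OF fin b] sum.remove [OF fin b] by (simp add: algebra_simps)
qed

lemma divided_diff_power_remove_node:
  assumes "finite A" and "inj_on x A" and "b \<in> A" and "card (A - {b}) = Suc k"
  shows "divided_diff x A (\<lambda>e. x e ^ (n + Suc k))
    = (\<Sum>j\<le>n. x b ^ j * divided_diff x (A - {b}) (\<lambda>e. x e ^ (n - j + k)))"
proof (induction n)
  case 0
  have "card A = Suc (Suc k)" using assms by (simp add: card_Suc_Diff1)
  then show ?case
    using divided_diff_power [of A "Suc k" x "Suc k"] divided_diff_power [OF assms(4), of x k] assms(2)
    by (auto intro: inj_on_subset)
next
  case (Suc n)
  have "divided_diff x A (\<lambda>e. x e ^ (Suc n + Suc k))
      = divided_diff x (A - {b}) (\<lambda>e. x e ^ (Suc n + k)) + x b * divided_diff x A (\<lambda>e. x e ^ (n + Suc k))"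
    using divided_diff_mult_node [OF assms(1-3), of "\<lambda>e. x e ^ (n + Suc k)"] by (simp add: algebra_simps)
  also have "\<dots> = (\<Sum>j\<le>Suc n. x b ^ j * divided_diff x (A - {b}) (\<lambda>e. x e ^ (Suc n - j + k)))"
    unfolding Suc.IH by (simp add: sum.atMost_Suc_shift sum_distrib_left mult.assoc del: sum.atMost_Suc)
  finally show ?case .
qed


section \<open>Partial fractions for E_a\<close>

lemma qvar_power: "qvar ^ n = Fract (monom 1 n) 1"
proof (induction n)
  case 0
  then show ?case by (simp add: One_fract_def monom_0 one_pCons)
next
  case (Suc n)
  have "[:0, 1:] = (monom 1 1 :: rat poly)" by (simp add: monom_Suc monom_0)
  with Suc show ?case by (simp add: qvar_def mult_monom)
qed

lemma qvar_power_eq_iff [simp]: "qvar ^ m = qvar ^ n \<longleftrightarrow> m = n"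
  by (auto simp: qvar_power eq_fract monom_eq_iff')

lemma qvar_nonzero [simp]: "qvar \<noteq> 0"
  using qvar_power_eq_iff [of 1 2] by (auto simp del: qvar_power_eq_iff)

lemma qvar_not_one [simp]: "qvar \<noteq> 1"
  using qvar_power_eq_iff [of 1 0] by (auto simp del: qvar_power_eq_iff)

lemma inj_on_qvar_power: "inj_on (\<lambda>e. qvar ^ e) A"
  by (simp add: inj_on_def)

lemma one_plus_qint: "1 + (qvar - 1) * qint n = qvar ^ n"
  by (simp add: qint_def)

lemma inj_qint: "inj qint"
proof (rule injI)
  fix m n
  assume "qint m = qint n"
  then have "1 + (qvar - 1) * qint m = 1 + (qvar - 1) * qint n" by simp
  then show "m = n" unfolding one_plus_qint by simp
qed

lemma poly_eqI_qint:
  fixes p r :: "qfield poly"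
  assumes "\<And>n. poly p (qint n) = poly r (qint n)"
  shows "p = r"
proof (rule ccontr)
  assume "p \<noteq> r"
  then have "finite {y. poly (p - r) y = 0}" by (intro poly_roots_finite) simp
  moreover have "range qint \<subseteq> {y. poly (p - r) y = 0}" using assms by auto
  ultimately have "finite (range qint)" by (rule finite_subset [rotated])
  then show False using inj_qint finite_imageD by (metis infinite_UNIV_nat)
qed

text \<open>h_n(q^a_1, ..., q^a_k), the value prescribed for E_a at [n]_q.\<close>

definition complete_hom_q :: "nat list \<Rightarrow> nat \<Rightarrow> qfield" where
  "complete_hom_q a n = (\<Sum>m\<in>{m. length m = length a \<and> sum_list m = n}.
      qvar ^ (\<Sum>i<length a. a ! i * m ! i))"

lemma finite_weak_compositions: "finite {m :: nat list. length m = k \<and> sum_list m = n}"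
proof (rule finite_subset [OF _ finite_lists_length_eq [of "{..n}" k]])
  show "{m :: nat list. length m = k \<and> sum_list m = n} \<subseteq> {m. set m \<subseteq> {..n} \<and> length m = k}"
    using member_le_sum_list by fastforce
qed simp

lemma complete_hom_q_single: "complete_hom_q [b] n = qvar ^ (b * n)"
proof -
  have "{m :: nat list. length m = length [b] \<and> sum_list m = n} = {[n]}"
    by (auto simp: length_Suc_conv)
  then show ?thesis unfolding complete_hom_q_def by simp
qed

lemma complete_hom_q_Cons:
  "complete_hom_q (b # a) n = (\<Sum>j\<le>n. qvar ^ (b * j) * complete_hom_q a (n - j))"
proof -
  let ?split = "\<lambda>(j, m). j # m"
  let ?T = "SIGMA j:{..n}. {m. length m = length a \<and> sum_list m = n - j}"
  have split_bij: "bij_betw ?split ?T {m. length m = length (b # a) \<and> sum_list m = n}"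
    by (rule bij_betw_byWitness [where f' = "\<lambda>m. (hd m, tl m)"]) (auto simp: length_Suc_conv)
  have weight: "(\<Sum>i<Suc (length a). (b # a) ! i * (j # m) ! i) = b * j + (\<Sum>i<length a. a ! i * m ! i)"
    for j m
    unfolding sum.lessThan_Suc_shift by simp
  have "complete_hom_q (b # a) n = (\<Sum>(j, m)\<in>?T. qvar ^ (b * j) * qvar ^ (\<Sum>i<length a. a ! i * m ! i))"
    unfolding complete_hom_q_def sum.reindex_bij_betw [OF split_bij, symmetric]
    by (intro sum.cong refl) (auto simp: weight power_add simp del: sum.lessThan_Suc)
  also have "\<dots> = (\<Sum>j\<le>n. qvar ^ (b * j) * complete_hom_q a (n - j))"
    unfolding complete_hom_q_def sum_distrib_left
    by (rule sum.Sigma [symmetric]) (auto simp: finite_weak_compositions)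
  finally show ?thesis .
qed

lemma complete_hom_q_eq_divided_diff:
  assumes "distinct a" and "a \<noteq> []"
  shows "complete_hom_q a n = divided_diff (\<lambda>e. qvar ^ e) (set a) (\<lambda>e. (qvar ^ e) ^ (n + length a - 1))"
  using assms
proof (induction a arbitrary: n)
  case Nil
  then show ?case by simp
next
  case (Cons b a)
  show ?case
  proof (cases "a = []")
    case True
    then show ?thesis by (simp add: complete_hom_q_single power_mult)
  next
    case False
    then obtain k where k: "length a = Suc k" by (cases a) auto
    have "set (b # a) - {b} = set a" using Cons.prems by auto
    moreover have "card (set a) = Suc k" using Cons.prems k by (simp add: distinct_card)
    ultimately have "divided_diff (\<lambda>e. qvar ^ e) (set (b # a)) (\<lambda>e. (qvar ^ e) ^ (n + Suc k))
        = (\<Sum>j\<le>n. (qvar ^ b) ^ j * divided_diff (\<lambda>e. qvar ^ e) (set a) (\<lambda>e. (qvar ^ e) ^ (n - j + k)))"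
      using divided_diff_power_remove_node [OF _ inj_on_qvar_power, of "set (b # a)" b k n] by simp
    also have "\<dots> = (\<Sum>j\<le>n. qvar ^ (b * j) * complete_hom_q a (n - j))"
      using Cons.IH Cons.prems False k by (simp add: power_mult)
    also have "\<dots> = complete_hom_q (b # a) n"
      by (rule complete_hom_q_Cons [symmetric])
    finally show ?thesis using k by simp
  qed
qed

text \<open>Since 1 + (q - 1) [n]_q = q^n, the right-hand side is a polynomial in y whose value at
  [n]_q is complete_hom_q a n.\<close>

lemma poly_Epoly:
  assumes "distinct a" and "a \<noteq> []"
  shows "poly (Epoly a) y = divided_diff (\<lambda>e. qvar ^ e) (set a)
    (\<lambda>e. (qvar ^ e) ^ (length a - 1) * (1 + (qvar - 1) * y) ^ e)"
proof -
  define p where "p = (\<Sum>e\<in>set a.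
    smult ((qvar ^ e) ^ (length a - 1) / (\<Prod>e'\<in>set a - {e}. qvar ^ e - qvar ^ e')) ([:1, qvar - 1:] ^ e))"
  have poly_p: "poly p y = divided_diff (\<lambda>e. qvar ^ e) (set a)
    (\<lambda>e. (qvar ^ e) ^ (length a - 1) * (1 + (qvar - 1) * y) ^ e)" for y
    unfolding p_def divided_diff_def by (simp add: poly_sum mult.commute)
  have "(qvar ^ e) ^ (length a - 1) * (qvar ^ n) ^ e = (qvar ^ e) ^ (n + length a - 1)" for e n
  proof -
    have "n + length a - 1 = n + (length a - 1)" using assms(2) by (cases a) auto
    then show ?thesis by (simp add: power_add mult.commute flip: power_mult)
  qed
  then have poly_p_qint: "poly p (qint n) = complete_hom_q a n" for n
    unfolding poly_p one_plus_qint complete_hom_q_eq_divided_diff [OF assms] by simp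
  have "Epoly a = p"
    unfolding Epoly_def
  proof (rule the_equality)
    show "\<forall>n. poly p (qint n) = (\<Sum>m\<in>{m. length m = length a \<and> sum_list m = n}.
        qvar ^ (\<Sum>i<length a. a ! i * m ! i))"
      using poly_p_qint by (simp add: complete_hom_q_def)
  qed (intro poly_eqI_qint, simp add: poly_p_qint complete_hom_q_def)
  then show ?thesis using poly_p by simp
qed

text \<open>The point is ([0]_q - [k+1]_q) / q^(k+1), where 1 + (q - 1) y = q^-(k+1).\<close>

lemma poly_Epoly_shifted_qint0:
  assumes "distinct a" and "a \<noteq> []" and "k = length a"
  shows "qvar ^ sum_list a * poly (Epoly a) (- qint (k + 1) / qvar ^ (k + 1))
    = (-1) ^ (k - 1) * (\<Sum>e\<in>set a. inverse (qvar ^ e))"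
proof -
  obtain j where j: "k = Suc j" using assms(2,3) by (cases a) auto
  have point: "1 + (qvar - 1) * (- qint (k + 1) / qvar ^ (k + 1)) = inverse (qvar ^ (k + 1))"
    by (simp add: qint_def field_simps)
  have cancel: "x ^ (k - 1) * inverse x ^ (k + 1) = inverse x ^ 2" if "x \<noteq> 0" for x :: qfield
    using that unfolding j by (simp add: field_simps power2_eq_square)
  have "(qvar ^ e) ^ (k - 1) * inverse (qvar ^ (k + 1)) ^ e = inverse (qvar ^ e) ^ 2" for e
  proof -
    have "inverse (qvar ^ (k + 1)) ^ e = inverse (qvar ^ e) ^ (k + 1)"
      by (metis mult.commute power_inverse power_mult)
    then show ?thesis using cancel [of "qvar ^ e"] by simp
  qed
  then have "poly (Epoly a) (- qint (k + 1) / qvar ^ (k + 1))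
      = divided_diff (\<lambda>e. qvar ^ e) (set a) (\<lambda>e. inverse (qvar ^ e) ^ 2)"
    unfolding poly_Epoly [OF assms(1,2)] point assms(3) [symmetric] by simp
  also have "\<dots> = (-1) ^ (k - 1) * (\<Prod>e\<in>set a. inverse (qvar ^ e)) * (\<Sum>e\<in>set a. inverse (qvar ^ e))"
    using assms j by (intro divided_diff_inverse_square inj_on_qvar_power) (simp_all add: distinct_card)
  moreover have "qvar ^ sum_list a * (\<Prod>e\<in>set a. inverse (qvar ^ e)) = 1"
  proof -
    have "sum_list a = (\<Sum>e\<in>set a. e)"
      using sum_list_distinct_conv_sum_set [OF assms(1), of id] by simp
    then show ?thesis by (simp add: power_sum flip: prod.distrib)
  qed
  ultimately show ?thesis by (simp add: algebra_simps)
qed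

section \<open>Chains and their Euler characteristic\<close>

lemma sorted_wrt_less_distinct:
  fixes xs :: "'a::order list"
  shows "sorted_wrt (<) xs \<Longrightarrow> distinct xs"
  by (induction xs) auto

lemma sorted_wrt_less_comparable:
  fixes c :: "'a::order list"
  shows "sorted_wrt (<) c \<Longrightarrow> x \<in> set c \<Longrightarrow> y \<in> set c \<Longrightarrow> x \<noteq> y \<Longrightarrow> x < y \<or> y < x"
  by (induction c) auto

lemma sorted_wrt_less_eq_if_set_eq:
  fixes xs ys :: "'a::order list"
  assumes "sorted_wrt (<) xs" and "sorted_wrt (<) ys" and "set xs = set ys"
  shows "xs = ys"
  using assms
proof (induction xs arbitrary: ys)
  case Nil
  then show ?case by simp
next
  case (Cons x xs)
  then obtain y ys' where ys: "ys = y # ys'" by (cases ys) auto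
  have "x = y"
  proof (rule ccontr)
    assume "x \<noteq> y"
    then have "x \<in> set ys'" "y \<in> set xs" using Cons.prems(3) ys by auto
    then have "y < x" "x < y" using Cons.prems(1,2) ys by auto
    then show False by simp
  qed
  moreover have "set xs = set ys'"
    using Cons.prems ys \<open>x = y\<close> by auto
  ultimately show ?case using Cons.IH Cons.prems(1,2) ys by simp
qed

definition all_chains :: "'a::order set \<Rightarrow> 'a list set" where
  "all_chains R = {c. sorted_wrt (<) c \<and> set c \<subseteq> R}"

lemma chains_eq_all_chains: "chains k R = {c \<in> all_chains R. length c = k}"
  unfolding chains_def all_chains_def by auto

lemma chains_0 [simp]: "chains 0 R = {[]}"
  unfolding chains_def by auto

lemma length_le_card_if_all_chains:
  assumes "finite R" and "c \<in> all_chains R"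
  shows "length c \<le> card R"
proof -
  have "distinct c" and "set c \<subseteq> R"
    using assms(2) sorted_wrt_less_distinct unfolding all_chains_def by auto
  then show ?thesis using assms(1) by (metis card_mono distinct_card)
qed

lemma finite_all_chains: "finite R \<Longrightarrow> finite (all_chains R)"
  by (rule finite_subset [OF _ finite_lists_length_le [of R "card R"]])
    (auto simp: all_chains_def length_le_card_if_all_chains)

lemma sum_chains_by_length:
  assumes "finite R"
  shows "(\<Sum>k\<in>{0..card R}. \<Sum>c\<in>chains k R. g c) = (\<Sum>c\<in>all_chains R. g c)"
  unfolding chains_eq_all_chains
  by (rule sum.group [OF finite_all_chains [OF assms]]) (auto dest: length_le_card_if_all_chains [OF assms])

lemma sum_sign_all_chains:
  assumes "finite R"
  shows "(\<Sum>c\<in>all_chains R. (-1::int) ^ length c) = 1 - chi R"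
proof -
  have "(\<Sum>c\<in>all_chains R. (-1::int) ^ length c)
      = (\<Sum>k\<in>{0..card R}. (-1::int) ^ k * int (card (chains k R)))"
    unfolding sum_chains_by_length [OF assms, symmetric] by (simp add: chains_def mult.commute)
  also have "\<dots> = 1 + (\<Sum>k\<in>{1..card R}. (-1::int) ^ k * int (card (chains k R)))"
    by (simp add: sum.atLeast_Suc_atMost)
  also have "(\<Sum>k\<in>{1..card R}. (-1::int) ^ k * int (card (chains k R))) = - chi R"
    unfolding chi_def sum_negf [symmetric]
    by (intro sum.cong refl) (auto simp: power_eq_if)
  finally show ?thesis by simp
qed

definition insert_chain :: "'a::order \<Rightarrow> 'a list \<Rightarrow> 'a list" where
  "insert_chain t c = filter (\<lambda>y. y < t) c @ t # filter (\<lambda>y. t < y) c"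

lemma sorted_wrt_insert_chain: "sorted_wrt (<) c \<Longrightarrow> sorted_wrt (<) (insert_chain t c)"
  unfolding insert_chain_def by (auto simp: sorted_wrt_append sorted_wrt_filter intro: order.strict_trans)

lemma set_insert_chain:
  "\<forall>y\<in>set c. y < t \<or> t < y \<Longrightarrow> set (insert_chain t c) = insert t (set c)"
  unfolding insert_chain_def by auto

lemma length_insert_chain:
  "\<forall>y\<in>set c. y < t \<or> t < y \<Longrightarrow> length (insert_chain t c) = Suc (length c)"
  unfolding insert_chain_def by (induction c) auto

lemma removeAll_insert_chain:
  assumes "sorted_wrt (<) c" and "\<forall>y\<in>set c. y < t \<or> t < y"
  shows "removeAll t (insert_chain t c) = c"
proof (rule sorted_wrt_less_eq_if_set_eq)
  show "sorted_wrt (<) (removeAll t (insert_chain t c))"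
    unfolding removeAll_filter_not_eq by (intro sorted_wrt_filter sorted_wrt_insert_chain assms(1))
  show "set (removeAll t (insert_chain t c)) = set c"
    using assms(2) by (auto simp: set_insert_chain)
qed (rule assms(1))

lemma insert_chain_removeAll:
  assumes "sorted_wrt (<) c" and "t \<in> set c"
  shows "insert_chain t (removeAll t c) = c"
proof (rule sorted_wrt_less_eq_if_set_eq)
  show "sorted_wrt (<) (insert_chain t (removeAll t c))"
    unfolding removeAll_filter_not_eq by (intro sorted_wrt_insert_chain sorted_wrt_filter assms(1))
  have "\<forall>y\<in>set (removeAll t c). y < t \<or> t < y"
    using sorted_wrt_less_comparable [OF assms(1) _ assms(2)] by auto
  then show "set (insert_chain t (removeAll t c)) = set c"
    using assms(2) by (auto simp: set_insert_chain)
qed (rule assms(1))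

text \<open>Inserting and removing a cone point t is a sign-reversing bijection.\<close>

lemma sum_sign_chains_through_cone_point:
  fixes t :: "'a::order"
  assumes "t \<in> R" and cone: "\<forall>y\<in>R. y \<le> t \<or> t \<le> y" and Q: "\<And>S. Q (insert t S) = Q S"
  shows "(\<Sum>c\<in>{c \<in> all_chains R. t \<in> set c \<and> Q (set c)}. (-1::int) ^ length c)
    = - (\<Sum>c\<in>{c \<in> all_chains R. t \<notin> set c \<and> Q (set c)}. (-1::int) ^ length c)"
proof -
  have comparable: "\<forall>y\<in>set c. y < t \<or> t < y" if "c \<in> all_chains R" "t \<notin> set c" for c
    using that cone unfolding all_chains_def by (auto simp: order.strict_iff_order)
  have Q_removeAll: "Q (set (removeAll t c)) = Q (set c)" if "t \<in> set c" for c
    using Q [of "set c - {t}"] that by (simp add: insert_absorb)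
  have "(\<Sum>c\<in>{c \<in> all_chains R. t \<notin> set c \<and> Q (set c)}. - ((-1::int) ^ length c))
      = (\<Sum>c\<in>{c \<in> all_chains R. t \<in> set c \<and> Q (set c)}. (-1::int) ^ length c)"
  proof (rule sum.reindex_bij_witness [where i = "removeAll t" and j = "insert_chain t"])
    fix c assume c: "c \<in> {c \<in> all_chains R. t \<notin> set c \<and> Q (set c)}"
    then show "removeAll t (insert_chain t c) = c"
      using removeAll_insert_chain comparable unfolding all_chains_def by blast
    show "insert_chain t c \<in> {c \<in> all_chains R. t \<in> set c \<and> Q (set c)}"
      using c comparable [of c] assms(1) Q
      by (auto simp: all_chains_def set_insert_chain sorted_wrt_insert_chain)
    show "(-1) ^ length (insert_chain t c) = - ((-1::int) ^ length c)"
      using c comparable [of c] by (simp add: length_insert_chain)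
  next
    fix c assume c: "c \<in> {c \<in> all_chains R. t \<in> set c \<and> Q (set c)}"
    then show "insert_chain t (removeAll t c) = c"
      using insert_chain_removeAll unfolding all_chains_def by blast
    show "removeAll t c \<in> {c \<in> all_chains R. t \<notin> set c \<and> Q (set c)}"
      using c Q_removeAll [of c]
      by (auto simp: all_chains_def removeAll_filter_not_eq sorted_wrt_filter)
  qed
  then show ?thesis by (simp add: sum_negf)
qed

lemma sum_sign_chains_cone_point:
  fixes t :: "'a::order"
  assumes "finite R" and "t \<in> R" and "\<forall>y\<in>R. y \<le> t \<or> t \<le> y" and "\<And>S. Q (insert t S) = Q S"
  shows "(\<Sum>c\<in>{c \<in> all_chains R. Q (set c)}. (-1::int) ^ length c) = 0"
proof -
  have "{c \<in> all_chains R. Q (set c)}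
      = {c \<in> all_chains R. t \<in> set c \<and> Q (set c)}
        \<union> {c \<in> all_chains R. t \<notin> set c \<and> Q (set c)}"
    by auto
  then show ?thesis
    using sum_sign_chains_through_cone_point [of t R Q] finite_all_chains [OF assms(1)] assms(2-4)
    by (simp add: sum.union_disjoint disjoint_iff)
qed

lemma chi_cone_point:
  fixes t :: "'a::order"
  assumes "finite R" and "t \<in> R" and "\<forall>y\<in>R. y \<le> t \<or> t \<le> y"
  shows "chi R = 1"
  using sum_sign_chains_cone_point [OF assms, of "\<lambda>_. True"] sum_sign_all_chains [OF assms(1)] by simp

lemma sum_sign_chains_containing_cone_point:
  fixes t :: "'a::order"
  assumes "finite R" and "t \<in> R" and "\<forall>y\<in>R. y \<le> t \<or> t \<le> y"
  shows "(\<Sum>c\<in>{c \<in> all_chains R. t \<in> set c}. (-1::int) ^ length c) = chi (R - {t}) - 1"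
proof -
  have "{c \<in> all_chains R. t \<notin> set c} = all_chains (R - {t})"
    unfolding all_chains_def by auto
  then show ?thesis
    using sum_sign_chains_through_cone_point [of t R "\<lambda>_. True"] sum_sign_all_chains [of "R - {t}"] assms
    by simp
qed

text \<open>After exchanging the sums, w x is weighted by the signed number of chains through x,
  which vanishes unless x = t.\<close>

lemma sum_all_chains_weighted:
  fixes t :: "'a::order" and w :: "'a \<Rightarrow> 'r::comm_ring_1"
  assumes "finite R" and "t \<in> R" and "\<forall>y\<in>R. y \<le> t \<or> t \<le> y"
  shows "(\<Sum>c\<in>all_chains R. (-1) ^ length c * (\<Sum>x\<in>set c. w x)) = w t * of_int (chi (R - {t}) - 1)"
proof -
  have through: "(\<Sum>c\<in>{c \<in> all_chains R. x \<in> set c}. (-1::int) ^ length c)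
      = (if x = t then chi (R - {t}) - 1 else 0)" for x
  proof (cases "x = t")
    case True
    then show ?thesis using sum_sign_chains_containing_cone_point [OF assms] by simp
  next
    case False
    then show ?thesis
      using sum_sign_chains_cone_point [of R t "\<lambda>S. x \<in> S"] assms by simp
  qed
  have "(\<Sum>c\<in>all_chains R. (-1) ^ length c * (\<Sum>x\<in>set c. w x))
      = (\<Sum>c\<in>all_chains R. \<Sum>x\<in>{x \<in> R. x \<in> set c}. (-1) ^ length c * w x)"
    by (intro sum.cong refl) (auto simp: all_chains_def sum_distrib_left intro: sum.cong)
  also have "\<dots> = (\<Sum>x\<in>R. \<Sum>c\<in>{c \<in> all_chains R. x \<in> set c}. (-1) ^ length c * w x)"
    by (rule sum.swap_restrict [OF finite_all_chains [OF assms(1)] assms(1)])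
  also have "\<dots> = (\<Sum>x\<in>R. w x * of_int (\<Sum>c\<in>{c \<in> all_chains R. x \<in> set c}. (-1) ^ length c))"
    by (simp add: sum_distrib_left mult.commute)
  also have "\<dots> = (\<Sum>x\<in>R. if x = t then w t * of_int (chi (R - {t}) - 1) else 0)"
    by (intro sum.cong refl) (simp add: through)
  finally show ?thesis using assms(1,2) by simp
qed

section \<open>The q-Zeta polynomial at [0]_q\<close>

lemma height_fun_strict_mono:
  assumes "finite P" and "height_fun P h" and "x \<in> P" and "y \<in> P" and "x < y"
  shows "h x < h y"
  using assms(3-5)
proof (induction "card {w \<in> P. x < w \<and> w < y}" arbitrary: x y rule: less_induct)
  case (less x y)
  show ?case
  proof (cases "covers P x y")
    case True
    then show ?thesis using assms(2) unfolding height_fun_def by blast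
  next
    case False
    then obtain w where w: "w \<in> P" "x < w" "w < y" using less.prems unfolding covers_def by blast
    have "{v \<in> P. x < v \<and> v < w} \<subset> {v \<in> P. x < v \<and> v < y}"
      and "{v \<in> P. w < v \<and> v < y} \<subset> {v \<in> P. x < v \<and> v < y}"
      using w by (auto intro: order.strict_trans)
    then have "card {v \<in> P. x < v \<and> v < w} < card {v \<in> P. x < v \<and> v < y}"
      and "card {v \<in> P. w < v \<and> v < y} < card {v \<in> P. x < v \<and> v < y}"
      using assms(1) by (auto intro: psubset_card_mono)
    then have "h x < h w" and "h w < h y" using less.hyps less.prems w by blast+
    then show ?thesis by simp
  qed
qed

lemma qint_0 [simp]: "qint 0 = 0"
  by (simp add: qint_def)

lemma poly_qZeta_qint0:
  assumes "finite P" and "height_fun P h"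
  shows "poly (qZeta P h) (qint 0)
    = - (\<Sum>c\<in>all_chains P. (-1) ^ length c * (\<Sum>x\<in>set c. inverse (qvar ^ h x)))"
proof -
  let ?T = "\<lambda>c. - ((-1) ^ length c * (\<Sum>x\<in>set c. inverse (qvar ^ h x)))"
  have chain_term: "poly (smult (qvar ^ (\<Sum>i<k. h (c ! i)))
      (pcompose (Epoly (map h c)) [: - qint (k + 1) / qvar ^ (k + 1), 1 / qvar ^ (k + 1) :])) 0 = ?T c"
    if "1 \<le> k" and "c \<in> chains k P" for k c
  proof -
    have c: "length c = k" "sorted_wrt (<) c" "set c \<subseteq> P"
      using that(2) unfolding chains_def by auto
    have "sorted_wrt (<) (map h c)"
      unfolding sorted_wrt_map
      by (rule sorted_wrt_mono_rel [OF _ c(2)]) (use c(3) height_fun_strict_mono [OF assms] in blast)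
    then have distinct: "distinct (map h c)" by (rule sorted_wrt_less_distinct)
    have "(\<Sum>i<k. h (c ! i)) = sum_list (map h c)"
      using c(1) by (simp add: sum_list_sum_nth atLeast0LessThan)
    then have "poly (smult (qvar ^ (\<Sum>i<k. h (c ! i)))
        (pcompose (Epoly (map h c)) [: - qint (k + 1) / qvar ^ (k + 1), 1 / qvar ^ (k + 1) :])) 0
        = qvar ^ sum_list (map h c) * poly (Epoly (map h c)) (- qint (k + 1) / qvar ^ (k + 1))"
      by (simp add: poly_pcompose)
    also have "\<dots> = (-1) ^ (k - 1) * (\<Sum>e\<in>set (map h c). inverse (qvar ^ e))"
      using that(1) c(1) by (intro poly_Epoly_shifted_qint0 distinct) auto
    also have "\<dots> = ?T c"
      using that(1) c(1) distinct by (cases k) (auto simp: sum.reindex distinct_map)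
    finally show ?thesis .
  qed
  have "poly (qZeta P h) (qint 0) = (\<Sum>k\<in>{1..card P}. \<Sum>c\<in>chains k P. ?T c)"
    unfolding qZeta_def qint_0 poly_sum using chain_term by (auto intro!: sum.cong)
  also have "\<dots> = (\<Sum>k\<in>{0..card P}. \<Sum>c\<in>chains k P. ?T c)"
    by (simp add: sum.atLeast_Suc_atMost)
  also have "\<dots> = (\<Sum>c\<in>all_chains P. ?T c)"
    by (rule sum_chains_by_length [OF assms(1)])
  finally show ?thesis by (simp add: sum_negf)
qed

theorem mainTheorem13:
  fixes P :: "'a::order set" and h :: "'a \<Rightarrow> nat" and z :: 'a
  assumes "finite P"
    and "height_fun P h"
    and "z \<in> P" and "\<forall>x\<in>P. z \<le> x"
  shows "poly (qZeta P h) (qint 0) = inverse (qvar ^ h z) * (1 - of_int (chi (P - {z})))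
     \<and> ((\<exists>t\<in>P. t \<noteq> z \<and> (\<forall>x\<in>P. x \<le> t)) \<longrightarrow> poly (qZeta P h) (qint 0) = 0)"
proof -
  have cone: "\<forall>x\<in>P. x \<le> z \<or> z \<le> x" using assms(4) by blast
  have "poly (qZeta P h) (qint 0) = inverse (qvar ^ h z) * (1 - of_int (chi (P - {z})))"
    unfolding poly_qZeta_qint0 [OF assms(1,2)] sum_all_chains_weighted [OF assms(1,3) cone]
    by (simp add: algebra_simps)
  moreover have "chi (P - {z}) = 1" if "t \<in> P" "t \<noteq> z" "\<forall>x\<in>P. x \<le> t" for t
    using that assms(1) by (intro chi_cone_point [of _ t]) auto
  ultimately show ?thesis by auto
qed

end
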